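(* In the setup below (no gauge condition imposed on $|\Psi_x^{SE}\rangle$), assume $p(\omega|x)>0$ for all $\omega\in\checkmark$. Then $\langle F_{\Omega,x}\rangle$ is real, $I^Q=4(\langle G_{\Omega,x}\rangle-\langle F_{\Omega,x}\rangle^2)$, and the measurement encoding is lossless, i.e. $\sum_{\omega\in\checkmark}p(\omega|x)I(\sigma_{x|\omega})=I^Q$, if and only if $$\langle F_{\omega,x}\rangle=\langle F_{\Omega,x}\rangle\langle E_{\omega,x}\rangle\ \ \text{for all }\omega\in\checkmark,\qquad \langle G_{\times,x}\rangle=\langle F_{\Omega,x}\rangle\langle F_{\times,x}^\dagger\rangle .$$ In particular, losslessness requires $\partial_x\langle E_{\omega,x}\rangle=0$ for all $\omega\in\checkmark$.
   Context: Setup: finite-dimensional $\mathcal H_S,\mathcal H_E$; unit vectors $|\psi_i\rangle\in\mathcal H_S$, $|\phi_i^E\rangle\in\mathcal H_E$; a $C^1$ family of unitaries $U_x^{SE}$ on $\mathcal H_S\otimes\mathcal H_E$; an orthonormal basis $\{|\pi_\omega^E\rangle\}_{\omega\in\Omega}$ of $\mathcal H_E$, $\Omega=\checkmark\sqcup\times$. $|\Psi_x^{SE}\rangle=U_x^{SE}(|\psi_i\rangle\otimes|\phi_i^E\rangle)$, $M_{\omega,x}=\langle\pi_\omega^E|U_x^{SE}|\phi_i^E\rangle$, $|\tilde\psi_{x|\omega}\rangle=M_{\omega,x}|\psi_i\rangle$, $p(\omega|x)=\|\tilde\psi_{x|\omega}\|^2$, $\sigma_{x|\omega}=|\tilde\psi_{x|\omega}\rangle\langle\tilde\psi_{x|\omega}|/p(\omega|x)$.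 QFI of a normalized pure state: $I(|\phi_x\rangle)=4(\langle\partial_x\phi_x|\partial_x\phi_x\rangle-|\langle\phi_x|\partial_x\phi_x\rangle|^2)$; $I^Q=I(|\Psi_x^{SE}\rangle)$. Define $E_{\omega,x}=M_{\omega,x}^\dagger M_{\omega,x}$, $F_{\omega,x}=i\,\partial_xM_{\omega,x}^\dagger M_{\omega,x}$, $G_{\omega,x}=\partial_xM_{\omega,x}^\dagger\partial_xM_{\omega,x}$, and for $S\subseteq\Omega$, $X_{S,x}=\sum_{\omega\in S}X_{\omega,x}$. $\langle A\rangle=\langle\psi_i|A|\psi_i\rangle$. *)

theory Defs
  imports "HOL-Analysis.Analysis"
begin

text \<open>Finite-dimensional Hilbert spaces are modelled as complex^'n with 'n a finite type.
  H_S = complex^'s, H_E = complex^'e, H_S (x) H_E = complex^('s \<times> 'e).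
  Operators are matrices complex^'n^'m (A $ row $ column), acting by *v.\<close>

definition cinner :: "complex^'n \<Rightarrow> complex^'n \<Rightarrow> complex" where
  "cinner u v = (\<Sum>i\<in>UNIV. cnj (u$i) * v$i)"

definition adj :: "complex^'n^'m \<Rightarrow> complex^'m^'n" where
  "adj A = (\<chi> i j. cnj (A$j$i))"

definition cscale :: "complex \<Rightarrow> complex^'n^'m \<Rightarrow> complex^'n^'m" where
  "cscale c A = (\<chi> i j. c * A$i$j)"

definition unitary_mat :: "complex^'n^'n \<Rightarrow> bool" where
  "unitary_mat U \<longleftrightarrow> adj U ** U = mat 1 \<and> U ** adj U = mat 1"

definition unit_vec :: "complex^'n \<Rightarrow> bool" where
  "unit_vec v \<longleftrightarrow> cinner v v = 1"

text \<open>Orthonormal basis of complex^'e indexed by \<Omega> = UNIV :: 'w set.\<close>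
definition is_onb :: "('w \<Rightarrow> complex^'e) \<Rightarrow> bool" where
  "is_onb \<pi> \<longleftrightarrow> (\<forall>w w'. cinner (\<pi> w) (\<pi> w') = (if w = w' then 1 else 0))
                 \<and> (\<forall>v. v = (\<Sum>w\<in>UNIV. cinner (\<pi> w) v *s \<pi> w))"

definition tensor :: "complex^'s \<Rightarrow> complex^'e \<Rightarrow> complex^('s \<times> 'e)" where
  "tensor \<psi> \<phi> = (\<chi> p. \<psi>$(fst p) * \<phi>$(snd p))"

text \<open>Partial matrix element  <a|_E U |b>_E, an operator on H_S.\<close>
definition pmat :: "complex^'e \<Rightarrow> complex^('s \<times> 'e)^('s \<times> 'e) \<Rightarrow> complex^'e \<Rightarrow> complex^'s^'s" where
  "pmat a U b = (\<chi> i j. \<Sum>k\<in>UNIV. \<Sum>l\<in>UNIV. cnj (a$k) * U$(i,k)$(j,l) * b$l)"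

text \<open>QFI of a (normalized) pure state family f at parameter x.\<close>
definition QFI :: "(real \<Rightarrow> complex^'n) \<Rightarrow> real \<Rightarrow> real" where
  "QFI f x = (let d = vector_derivative f (at x) in
      4 * (Re (cinner d d) - (cmod (cinner (f x) d))\<^sup>2))"

definition expect :: "complex^'n^'n \<Rightarrow> complex^'n \<Rightarrow> complex" where
  "expect A \<psi> = cinner \<psi> (A *v \<psi>)"

definition Psi :: "(real \<Rightarrow> complex^('s \<times> 'e)^('s \<times> 'e)) \<Rightarrow> complex^'s \<Rightarrow> complex^'e \<Rightarrow> real \<Rightarrow> complex^('s \<times> 'e)" where
  "Psi U \<psi> \<phi> x = U x *v tensor \<psi> \<phi>"

definition Mop :: "(real \<Rightarrow> complex^('s \<times> 'e)^('s \<times> 'e)) \<Rightarrow> ('w \<Rightarrow> complex^'e) \<Rightarrow> complex^'e \<Rightarrow> 'w \<Rightarrow> real \<Rightarrow> complex^'s^'s" where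
  "Mop U \<pi> \<phi> w x = pmat (\<pi> w) (U x) \<phi>"

definition dMop :: "(real \<Rightarrow> complex^('s \<times> 'e)^('s \<times> 'e)) \<Rightarrow> ('w \<Rightarrow> complex^'e) \<Rightarrow> complex^'e \<Rightarrow> 'w \<Rightarrow> real \<Rightarrow> complex^'s^'s" where
  "dMop U \<pi> \<phi> w x = vector_derivative (\<lambda>y. Mop U \<pi> \<phi> w y) (at x)"

definition Eop where "Eop U \<pi> \<phi> w x = adj (Mop U \<pi> \<phi> w x) ** Mop U \<pi> \<phi> w x"
definition Fop where "Fop U \<pi> \<phi> w x = cscale \<i> (adj (dMop U \<pi> \<phi> w x) ** Mop U \<pi> \<phi> w x)"
definition Gop where "Gop U \<pi> \<phi> w x = adj (dMop U \<pi> \<phi> w x) ** dMop U \<pi> \<phi> w x"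

definition Eset where "Eset U \<pi> \<phi> S x = (\<Sum>w\<in>S. Eop U \<pi> \<phi> w x)"
definition Fset where "Fset U \<pi> \<phi> S x = (\<Sum>w\<in>S. Fop U \<pi> \<phi> w x)"
definition Gset where "Gset U \<pi> \<phi> S x = (\<Sum>w\<in>S. Gop U \<pi> \<phi> w x)"

text \<open>Unnormalized conditional state, outcome probability, and a normalized
  state vector representing sigma_{x|w}.\<close>
definition psit where "psit U \<pi> \<phi> \<psi> w x = Mop U \<pi> \<phi> w x *v \<psi>"
definition prob where "prob U \<pi> \<phi> \<psi> w x = Re (cinner (psit U \<pi> \<phi> \<psi> w x) (psit U \<pi> \<phi> \<psi> w x))"
definition sigma_vec where
  "sigma_vec U \<pi> \<phi> \<psi> w x = (1 / sqrt (prob U \<pi> \<phi> \<psi> w x)) *\<^sub>R psit U \<pi> \<phi> \<psi> w x"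

end

theory Submission
  imports Defs
begin

(* The outcomes w split Psi = U (psi (x) phi) into the branches M_w psi = (<pi_w| (x) 1) Psi, so
   Parseval in the environment basis writes <Psi|Psi>, i <dPsi|Psi> and <dPsi|dPsi> as the sums
   over w of <E_w>, <F_w> and <G_w>.  Normalisation of Psi forces Re <Psi|dPsi> = 0, hence
   t = <F_Omega> is real and I^Q = 4 (<G_Omega> - t^2), while the normalised branch sigma_w contributes
   p_w I(sigma_w) = 4 (<G_w> - |<F_w>|^2 / p_w).  With X the complement of C, the information lost
   by the measurement is therefore 4 times
     sum_{w in C} |<F_w> - t p_w|^2 / p_w  +  sum_{w in X} ||(dM_w - i t M_w) psi||^2,
   a sum of nonnegative terms.  It vanishes iff <F_w> = t <E_w> on C and, given that, the second
   sum equals <G_X> - t <F_X^dagger>.  Finally d<E_w>/dx = 2 Im <F_w>, which the first condition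
   makes zero. *)

lemma cinner_commute: "cinner v u = cnj (cinner u v)"
  by (simp add: cinner_def mult.commute)

lemma cinner_add_left: "cinner (u + v) w = cinner u w + cinner v w"
  by (simp add: cinner_def distrib_right sum.distrib)

lemma cinner_add_right: "cinner u (v + w) = cinner u v + cinner u w"
  by (simp add: cinner_def distrib_left sum.distrib)

lemma cinner_diff_left: "cinner (u - v) w = cinner u w - cinner v w"
  by (simp add: cinner_def left_diff_distrib sum_subtractf)

lemma cinner_diff_right: "cinner u (v - w) = cinner u v - cinner u w"
  by (simp add: cinner_def right_diff_distrib sum_subtractf)

lemma cvec_scaleR_nth: "(r *\<^sub>R v) $ i = of_real r * v $ i" for v :: "complex^'n"
  by (metis vector_scaleR_component scaleR_conv_of_real)

lemma cinner_scaleR_left: "cinner (r *\<^sub>R u) v = of_real r * cinner u v"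
  by (simp add: cinner_def cvec_scaleR_nth sum_distrib_left mult.assoc del: vector_scaleR_component)

lemma cinner_scaleR_right: "cinner u (r *\<^sub>R v) = of_real r * cinner u v"
  by (simp add: cinner_def cvec_scaleR_nth sum_distrib_left algebra_simps del: vector_scaleR_component)

lemma cinner_smult_left: "cinner (c *s u) v = cnj c * cinner u v"
  by (simp add: cinner_def sum_distrib_left algebra_simps)

lemma cinner_smult_right: "cinner u (c *s v) = c * cinner u v"
  by (simp add: cinner_def sum_distrib_left algebra_simps)

lemma cinner_sum_right: "cinner u (\<Sum>i\<in>I. f i) = (\<Sum>i\<in>I. cinner u (f i))"
  by (simp add: cinner_def sum_component sum_distrib_left) (rule sum.swap)

lemma cinner_self_real: "cinner v v = of_real (Re (cinner v v))"
  by (simp add: cinner_def complex_eq_iff Im_sum)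

lemma cinner_self_nonneg: "0 \<le> Re (cinner v v)"
  by (simp add: cinner_def Re_sum sum_nonneg)

lemma has_vector_derivative_cinner:
  assumes "(f has_vector_derivative f') (at x within S)" and "(g has_vector_derivative g') (at x within S)"
  shows "((\<lambda>y. cinner (f y) (g y)) has_vector_derivative cinner f' (g x) + cinner (f x) g') (at x within S)"
proof -
  have "((\<lambda>y. \<Sum>i\<in>UNIV. cnj (f y $ i) * g y $ i) has_vector_derivative
      (\<Sum>i\<in>UNIV. cnj (f x $ i) * g' $ i + cnj (f' $ i) * g x $ i)) (at x within S)"
    by (intro has_vector_derivative_sum has_vector_derivative_mult has_vector_derivative_cnj
        bounded_linear.has_vector_derivative[OF bounded_linear_vec_nth] assms)
  then show ?thesis
    by (simp add: cinner_def sum.distrib add.commute)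
qed

lemma adj_adj [simp]: "adj (adj A) = A"
  by (simp add: adj_def vec_eq_iff)

lemma cinner_adj: "cinner u (A *v v) = cinner (adj A *v u) v"
  unfolding cinner_def adj_def matrix_vector_mult_def
  by (simp add: sum_distrib_left sum_distrib_right algebra_simps) (rule sum.swap)

lemma cinner_unitary: "unitary_mat U \<Longrightarrow> cinner (U *v v) (U *v v) = cinner v v"
  by (simp add: unitary_mat_def cinner_adj matrix_vector_mul_assoc)

lemma sum_UNIV_prod: "(\<Sum>p\<in>UNIV. g p) = (\<Sum>j\<in>UNIV. \<Sum>l\<in>UNIV. g (j, l))"
  for g :: "'a::finite \<times> 'b::finite \<Rightarrow> 'c::comm_monoid_add"
  by (simp add: sum.cartesian_product flip: UNIV_Times_UNIV)

lemma cinner_tensor: "cinner (tensor a b) (tensor a b) = cinner a a * cinner b b"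
  by (simp add: cinner_def tensor_def sum_UNIV_prod sum_product mult_ac)

lemma expect_adj_mult: "expect (adj A ** B) \<psi> = cinner (A *v \<psi>) (B *v \<psi>)"
  by (simp add: expect_def matrix_vector_mul_assoc[symmetric] cinner_adj)

lemma expect_cscale: "expect (cscale c A) \<psi> = c * expect A \<psi>"
  by (simp add: expect_def cscale_def cinner_def matrix_vector_mult_def sum_distrib_left algebra_simps)

lemma expect_adj: "expect (adj A) \<psi> = cnj (expect A \<psi>)"
  unfolding expect_def cinner_adj[of \<psi> "adj A"] adj_adj by (rule cinner_commute)

lemma expect_sum: "expect (\<Sum>i\<in>I. A i) \<psi> = (\<Sum>i\<in>I. expect (A i) \<psi>)"
proof -
  have "(\<Sum>i\<in>I. A i) *v \<psi> = (\<Sum>i\<in>I. A i *v \<psi>)"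
    by (simp add: vec_eq_iff matrix_vector_mult_def sum_component sum_distrib_right) (rule allI, rule sum.swap)
  then show ?thesis
    by (simp add: expect_def cinner_sum_right)
qed

lemma onb_parseval:
  assumes "is_onb \<pi>"
  shows "cinner u v = (\<Sum>w\<in>UNIV. cinner u (\<pi> w) * cinner (\<pi> w) v)"
proof -
  have "v = (\<Sum>w\<in>UNIV. cinner (\<pi> w) v *s \<pi> w)"
    using assms[unfolded is_onb_def, THEN conjunct2] by (rule spec)
  then have "cinner u v = cinner u (\<Sum>w\<in>UNIV. cinner (\<pi> w) v *s \<pi> w)"
    by (rule arg_cong)
  also have "\<dots> = (\<Sum>w\<in>UNIV. cinner u (\<pi> w) * cinner (\<pi> w) v)"
    by (simp only: cinner_sum_right cinner_smult_right mult.commute)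
  finally show ?thesis .
qed

definition env_slice :: "'s::finite \<Rightarrow> complex^('s \<times> 'e::finite) \<Rightarrow> complex^'e" where
  "env_slice i V = (\<chi> k. V $ (i, k))"

(* (<a| (x) 1) V, the partial inner product over the environment factor *)
definition env_contract :: "complex^'e::finite \<Rightarrow> complex^('s::finite \<times> 'e) \<Rightarrow> complex^'s" where
  "env_contract a V = (\<chi> i. cinner a (env_slice i V))"

lemma cinner_env_slices: "cinner V W = (\<Sum>i\<in>UNIV. cinner (env_slice i V) (env_slice i W))"
  by (simp add: cinner_def env_slice_def sum_UNIV_prod)

lemma cinner_env_contract_onb:
  assumes "is_onb \<pi>"
  shows "cinner V W = (\<Sum>w\<in>UNIV. cinner (env_contract (\<pi> w) V) (env_contract (\<pi> w) W))"
proof -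
  have "cinner V W = (\<Sum>i\<in>UNIV. \<Sum>w\<in>UNIV. cinner (env_slice i V) (\<pi> w) * cinner (\<pi> w) (env_slice i W))"
    unfolding cinner_env_slices[of V] by (rule sum.cong[OF refl], rule onb_parseval[OF assms])
  also have "\<dots> = (\<Sum>w\<in>UNIV. \<Sum>i\<in>UNIV. cnj (cinner (\<pi> w) (env_slice i V)) * cinner (\<pi> w) (env_slice i W))"
    by (subst sum.swap) (simp only: cinner_commute[of "env_slice _ V"])
  finally show ?thesis
    by (simp add: env_contract_def cinner_def[where u = "vec_lambda f" and v = "vec_lambda g" for f g])
qed

lemma pmat_mult_tensor: "pmat a A b *v \<psi> = env_contract a (A *v tensor \<psi> b)"
  unfolding vec_eq_iff
proof
  fix i
  have "(pmat a A b *v \<psi>) $ i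
      = (\<Sum>j\<in>UNIV. \<Sum>k\<in>UNIV. \<Sum>l\<in>UNIV. cnj (a $ k) * (A $ (i, k) $ (j, l) * (\<psi> $ j * b $ l)))"
    by (simp add: pmat_def matrix_vector_mult_def sum_distrib_left sum_distrib_right mult_ac)
  also have "\<dots> = (\<Sum>k\<in>UNIV. cnj (a $ k) * (\<Sum>j\<in>UNIV. \<Sum>l\<in>UNIV. A $ (i, k) $ (j, l) * (\<psi> $ j * b $ l)))"
    by (subst sum.swap) (simp only: sum_distrib_left)
  also have "\<dots> = env_contract a (A *v tensor \<psi> b) $ i"
    by (simp add: env_contract_def env_slice_def cinner_def matrix_vector_mult_def tensor_def sum_UNIV_prod)
  finally show "(pmat a A b *v \<psi>) $ i = env_contract a (A *v tensor \<psi> b) $ i" .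
qed

lemma cmat_scaleR_nth: "(r *\<^sub>R A) $ i $ j = of_real r * A $ i $ j" for A :: "complex^'n^'m"
  by (metis vector_scaleR_component scaleR_conv_of_real)

lemma matrix_vector_mult_scaleR: "(r *\<^sub>R A) *v v = r *\<^sub>R (A *v v)" for A :: "complex^'n^'m"
  by (simp add: vec_eq_iff matrix_vector_mult_def cvec_scaleR_nth cmat_scaleR_nth sum_distrib_left mult_ac
      del: vector_scaleR_component)

lemma bounded_linear_matrix_vector_mult_left: "bounded_linear (\<lambda>A::complex^'n^'m. A *v v)"
  unfolding linear_conv_bounded_linear[symmetric]
  by (rule linearI) (simp_all add: matrix_vector_mult_add_rdistrib matrix_vector_mult_scaleR)

lemma bounded_linear_pmat: "bounded_linear (\<lambda>A. pmat a A b)"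
  unfolding linear_conv_bounded_linear[symmetric]
  by (rule linearI)
    (simp_all add: vec_eq_iff pmat_def cvec_scaleR_nth cmat_scaleR_nth distrib_left distrib_right sum.distrib
      sum_distrib_left mult_ac del: vector_scaleR_component)

lemma QFI_unit_path:
  assumes f': "(f has_vector_derivative f') (at x)" and unit: "\<And>y. cinner (f y) (f y) = 1"
  shows "Re (cinner (f x) f') = 0"
    and "QFI f x = 4 * (Re (cinner f' f') - (Im (cinner (f x) f'))\<^sup>2)"
proof -
  have "((\<lambda>y. cinner (f y) (f y)) has_vector_derivative cinner f' (f x) + cinner (f x) f') (at x)"
    using has_vector_derivative_cinner[OF f' f'] .
  moreover have "((\<lambda>y. cinner (f y) (f y)) has_vector_derivative 0) (at x)"
    by (simp add: unit)
  ultimately have "cinner f' (f x) + cinner (f x) f' = 0"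
    by (rule vector_derivative_unique_at)
  then show Re0: "Re (cinner (f x) f') = 0"
    by (simp add: cinner_commute[of f' "f x"] complex_eq_iff)
  then show "QFI f x = 4 * (Re (cinner f' f') - (Im (cinner (f x) f'))\<^sup>2)"
    using vector_derivative_at[OF f'] by (simp add: QFI_def cmod_power2)
qed

lemma has_vector_derivative_normalized:
  fixes f :: "real \<Rightarrow> complex^'n"
  defines "p \<equiv> \<lambda>y. Re (cinner (f y) (f y))"
  assumes f': "(f has_vector_derivative f') (at x)" and pos: "0 < p x"
  shows "((\<lambda>y. (1 / sqrt (p y)) *\<^sub>R f y) has_vector_derivative
    (1 / sqrt (p x)) *\<^sub>R f' + (- Re (cinner (f x) f') / sqrt (p x) ^ 3) *\<^sub>R f x) (at x)"
proof -
  define a where "a = cinner (f x) f'"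
  define s where "s = sqrt (p x)"
  have s: "0 < s"
    using pos by (simp add: s_def)
  have "(p has_real_derivative Re (cinner f' (f x) + cinner (f x) f')) (at x)"
    unfolding p_def has_real_derivative_iff_has_vector_derivative
    by (rule bounded_linear.has_vector_derivative[OF bounded_linear_Re has_vector_derivative_cinner[OF f' f']])
  then have dp: "(p has_real_derivative 2 * Re a) (at x)"
    by (simp add: a_def cinner_commute[of f' "f x"])
  have "((\<lambda>y. sqrt (p y)) has_real_derivative Re a / s) (at x)"
    by (rule DERIV_cong[OF DERIV_chain2[OF DERIV_real_sqrt[OF pos] dp]])
      (use s in \<open>simp add: s_def[symmetric] field_simps\<close>)
  then have "((\<lambda>y. 1 / sqrt (p y)) has_real_derivative - Re a / s ^ 3) (at x)"
    unfolding inverse_eq_divide[symmetric]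
    by (rule DERIV_cong[OF DERIV_inverse_fun])
      (use s in \<open>simp_all add: s_def[symmetric] field_simps power3_eq_cube\<close>)
  from has_vector_derivative_scaleR[OF this f'] show ?thesis
    by (simp add: s_def a_def)
qed

lemma weighted_QFI_normalization:
  fixes f :: "real \<Rightarrow> complex^'n"
  defines "p \<equiv> \<lambda>y. Re (cinner (f y) (f y))"
  assumes f': "(f has_vector_derivative f') (at x)" and pos: "0 < p x"
  shows "p x * QFI (\<lambda>y. (1 / sqrt (p y)) *\<^sub>R f y) x
    = 4 * (Re (cinner f' f') - (cmod (cinner (f x) f'))\<^sup>2 / p x)"
proof -
  define a where "a = cinner (f x) f'"
  define s where "s = sqrt (p x)"
  define g where "g = Re (cinner f' f')"
  define \<sigma>' where "\<sigma>' = (1 / s) *\<^sub>R f' + (- Re a / s ^ 3) *\<^sub>R f x"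
  have s0: "s \<noteq> 0" and s2: "s\<^sup>2 = p x"
    using pos by (simp_all add: s_def)
  have "Re (cinner (f y) (f y)) = p y" for y
    by (simp add: p_def)
  note deriv = has_vector_derivative_normalized[OF f' pos[unfolded p_def], unfolded this, folded a_def s_def, folded \<sigma>'_def]
  have ff: "cinner (f x) (f x) = of_real (s\<^sup>2)"
    unfolding s2 p_def by (rule cinner_self_real)
  have gg: "cinner f' f' = of_real g"
    unfolding g_def by (rule cinner_self_real)
  have fa: "cinner f' (f x) = cnj a"
    unfolding a_def by (rule cinner_commute)
  have "Re (cinner \<sigma>' \<sigma>') = (g - (Re a)\<^sup>2 / s\<^sup>2) / s\<^sup>2"
    unfolding \<sigma>'_def cinner_add_left cinner_add_right cinner_scaleR_left cinner_scaleR_right ff gg fa a_def[symmetric]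
    using s0 by (simp add: field_simps power2_eq_square power3_eq_cube)
  moreover have "cinner ((1 / s) *\<^sub>R f x) \<sigma>' = Complex 0 (Im a / s\<^sup>2)"
    unfolding \<sigma>'_def cinner_add_right cinner_scaleR_left cinner_scaleR_right ff a_def[symmetric]
    using s0 by (simp add: complex_eq_iff field_simps power2_eq_square power3_eq_cube)
  ultimately have Q: "QFI (\<lambda>y. (1 / sqrt (p y)) *\<^sub>R f y) x = 4 * ((g - (Re a)\<^sup>2 / s\<^sup>2) / s\<^sup>2 - (Im a / s\<^sup>2)\<^sup>2)"
    using vector_derivative_at[OF deriv] by (simp add: QFI_def s_def[symmetric] cmod_power2)
  show ?thesis
    unfolding Q s2[symmetric] a_def[symmetric] g_def[symmetric] cmod_power2
    using s0 by (simp add: field_simps power2_eq_square)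
qed

lemma sum_UNIV_Compl: "sum f (UNIV :: 'a::finite set) = sum f C + sum f (- C)"
  by (metis Compl_eq_Diff_UNIV add.commute finite subset_UNIV sum.subset_diff)

lemma loss_decomposition:
  fixes p g :: "'w::finite \<Rightarrow> real" and f :: "'w \<Rightarrow> complex" and t :: real
  assumes sum_p: "(\<Sum>w\<in>UNIV. p w) = 1" and sum_f: "(\<Sum>w\<in>UNIV. f w) = of_real t"
    and pos: "\<forall>w\<in>C. 0 < p w"
  shows "(\<Sum>w\<in>UNIV. g w) - t\<^sup>2 - (\<Sum>w\<in>C. g w - (cmod (f w))\<^sup>2 / p w)
    = (\<Sum>w\<in>C. (cmod (f w - of_real (t * p w)))\<^sup>2 / p w)
      + (\<Sum>w\<in>-C. g w - 2 * t * Re (f w) + t\<^sup>2 * p w)"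
proof -
  have square: "(cmod (f w - of_real (t * p w)))\<^sup>2 / p w = (cmod (f w))\<^sup>2 / p w - 2 * t * Re (f w) + t\<^sup>2 * p w"
    if "w \<in> C" for w
  proof -
    have "(cmod (f w - of_real (t * p w)))\<^sup>2 = (cmod (f w))\<^sup>2 - 2 * t * p w * Re (f w) + (t * p w)\<^sup>2"
      unfolding cmod_power2 by (simp add: power2_eq_square algebra_simps)
    moreover have "p w \<noteq> 0"
      using pos that by force
    ultimately show ?thesis
      by (simp add: field_simps power2_eq_square)
  qed
  have "(\<Sum>w\<in>C. (cmod (f w - of_real (t * p w)))\<^sup>2 / p w)
      = (\<Sum>w\<in>C. (cmod (f w))\<^sup>2 / p w - 2 * t * Re (f w) + t\<^sup>2 * p w)"
    by (rule sum.cong[OF refl square])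
  then have "(\<Sum>w\<in>C. (cmod (f w - of_real (t * p w)))\<^sup>2 / p w)
        + (\<Sum>w\<in>-C. g w - 2 * t * Re (f w) + t\<^sup>2 * p w)
      = (\<Sum>w\<in>C. (cmod (f w))\<^sup>2 / p w) + (\<Sum>w\<in>-C. g w)
        - 2 * t * (\<Sum>w\<in>UNIV. Re (f w)) + t\<^sup>2 * (\<Sum>w\<in>UNIV. p w)"
    by (simp add: sum.distrib sum_subtractf sum_distrib_left sum_UNIV_Compl[of _ C] ring_distribs)
  moreover have "(\<Sum>w\<in>UNIV. Re (f w)) = t"
    using arg_cong[OF sum_f, of Re] by (simp add: Re_sum)
  ultimately show ?thesis
    by (simp add: sum_p sum_subtractf sum_UNIV_Compl[of g C] power2_eq_square)
qed

lemma sum_Compl_eq_zero_iff: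
  fixes p g :: "'w::finite \<Rightarrow> real" and f :: "'w \<Rightarrow> complex" and t :: real
  assumes sum_p: "(\<Sum>w\<in>UNIV. p w) = 1" and sum_f: "(\<Sum>w\<in>UNIV. f w) = of_real t"
    and f_C: "\<forall>w\<in>C. f w = of_real (t * p w)"
  shows "(\<Sum>w\<in>-C. g w - 2 * t * Re (f w) + t\<^sup>2 * p w) = 0
    \<longleftrightarrow> of_real (\<Sum>w\<in>-C. g w) = of_real t * cnj (\<Sum>w\<in>-C. f w)"
proof -
  have "(\<Sum>w\<in>-C. f w) = of_real t - (\<Sum>w\<in>C. of_real (t * p w))"
    using sum_f sum_UNIV_Compl[of f C] f_C by (simp add: algebra_simps)
  also have "\<dots> = of_real (t * (1 - (\<Sum>w\<in>C. p w)))"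
    by (simp add: sum_distrib_left right_diff_distrib)
  also have "1 - (\<Sum>w\<in>C. p w) = (\<Sum>w\<in>-C. p w)"
    using sum_p sum_UNIV_Compl[of p C] by simp
  finally have sum_f_Compl: "(\<Sum>w\<in>-C. f w) = of_real (t * (\<Sum>w\<in>-C. p w))" .
  have "(\<Sum>w\<in>-C. Re (f w)) = t * (\<Sum>w\<in>-C. p w)"
    using arg_cong[OF sum_f_Compl, of Re] by (simp add: Re_sum)
  then have "(\<Sum>w\<in>-C. g w - 2 * t * Re (f w) + t\<^sup>2 * p w) = (\<Sum>w\<in>-C. g w) - t\<^sup>2 * (\<Sum>w\<in>-C. p w)"
    by (simp add: sum.distrib sum_subtractf sum_distrib_left[symmetric] power2_eq_square)
  then show ?thesis
    unfolding sum_f_Compl by (simp flip: of_real_mult del: of_real_sum add: power2_eq_square mult.assoc)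
qed

lemma lossless_iff_conditions:
  fixes p g :: "'w::finite \<Rightarrow> real" and f :: "'w \<Rightarrow> complex" and t :: real
  assumes sum_p: "(\<Sum>w\<in>UNIV. p w) = 1" and sum_f: "(\<Sum>w\<in>UNIV. f w) = of_real t"
    and pos: "\<forall>w\<in>C. 0 < p w"
    and nonneg: "\<forall>w\<in>-C. 0 \<le> g w - 2 * t * Re (f w) + t\<^sup>2 * p w"
  shows "(\<Sum>w\<in>C. g w - (cmod (f w))\<^sup>2 / p w) = (\<Sum>w\<in>UNIV. g w) - t\<^sup>2
    \<longleftrightarrow> (\<forall>w\<in>C. f w = of_real (t * p w))
        \<and> of_real (\<Sum>w\<in>-C. g w) = of_real t * cnj (\<Sum>w\<in>-C. f w)"
proof -
  define q where "q w = (cmod (f w - of_real (t * p w)))\<^sup>2 / p w" for w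
  have q_nonneg: "\<forall>w\<in>C. 0 \<le> q w"
    using pos by (auto simp: q_def less_imp_le)
  have "\<forall>w\<in>C. q w = 0 \<longleftrightarrow> f w = of_real (t * p w)"
    using pos by (auto simp: q_def)
  moreover have "sum q C = 0 \<longleftrightarrow> (\<forall>w\<in>C. q w = 0)"
    using q_nonneg by (simp add: sum_nonneg_eq_0_iff)
  moreover have "0 \<le> sum q C" "0 \<le> (\<Sum>w\<in>-C. g w - 2 * t * Re (f w) + t\<^sup>2 * p w)"
    using q_nonneg nonneg by (auto intro: sum_nonneg)
  ultimately show ?thesis
    using loss_decomposition[OF sum_p sum_f pos, of g, folded q_def]
      sum_Compl_eq_zero_iff[OF sum_p sum_f, of C g]
    by (smt (verit))
qed

locale environment_measurement =
  fixes U :: "real \<Rightarrow> complex^('s::finite \<times> 'e::finite)^('s \<times> 'e)"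
    and \<psi> :: "complex^'s" and \<phi> :: "complex^'e" and \<pi> :: "'w::finite \<Rightarrow> complex^'e"
  assumes unit_\<psi>: "unit_vec \<psi>" and unit_\<phi>: "unit_vec \<phi>"
    and unitary: "\<forall>y. unitary_mat (U y)"
    and differentiable: "\<forall>y. U differentiable (at y)"
    and onb: "is_onb \<pi>"
begin

abbreviation dPsi :: "real \<Rightarrow> complex^('s \<times> 'e)" where
  "dPsi x \<equiv> vector_derivative U (at x) *v tensor \<psi> \<phi>"

lemma U_has_derivative: "(U has_vector_derivative vector_derivative U (at x)) (at x)"
  using differentiable vector_derivative_works by blast

lemma Psi_has_derivative: "(Psi U \<psi> \<phi> has_vector_derivative dPsi x) (at x)"
  unfolding Psi_def[abs_def]
  by (rule bounded_linear.has_vector_derivative[OF bounded_linear_matrix_vector_mult_left U_has_derivative])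

lemma Psi_unit: "cinner (Psi U \<psi> \<phi> y) (Psi U \<psi> \<phi> y) = 1"
  using unit_\<psi> unit_\<phi> unitary by (simp add: Psi_def cinner_unitary cinner_tensor unit_vec_def)

lemma dMop_eq: "dMop U \<pi> \<phi> w x = pmat (\<pi> w) (vector_derivative U (at x)) \<phi>"
  unfolding dMop_def Mop_def
  by (rule vector_derivative_at[OF bounded_linear.has_vector_derivative[OF bounded_linear_pmat U_has_derivative]])

lemma psit_has_derivative: "(psit U \<pi> \<phi> \<psi> w has_vector_derivative dMop U \<pi> \<phi> w x *v \<psi>) (at x)"
  unfolding psit_def[abs_def] Mop_def dMop_eq
  by (rule bounded_linear.has_vector_derivative[OF bounded_linear_matrix_vector_mult_left
        bounded_linear.has_vector_derivative[OF bounded_linear_pmat U_has_derivative]])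

lemma psit_env_contract: "psit U \<pi> \<phi> \<psi> w y = env_contract (\<pi> w) (Psi U \<psi> \<phi> y)"
  by (simp add: psit_def Mop_def Psi_def pmat_mult_tensor)

lemma dMop_env_contract: "dMop U \<pi> \<phi> w x *v \<psi> = env_contract (\<pi> w) (dPsi x)"
  by (simp add: dMop_eq pmat_mult_tensor)

lemma expect_Eop: "expect (Eop U \<pi> \<phi> w y) \<psi> = cinner (psit U \<pi> \<phi> \<psi> w y) (psit U \<pi> \<phi> \<psi> w y)"
  by (simp add: Eop_def expect_adj_mult psit_def)

lemma expect_Eop_prob: "expect (Eop U \<pi> \<phi> w y) \<psi> = of_real (prob U \<pi> \<phi> \<psi> w y)"
  unfolding expect_Eop prob_def by (rule cinner_self_real)

lemma expect_Fop: "expect (Fop U \<pi> \<phi> w x) \<psi> = \<i> * cinner (dMop U \<pi> \<phi> w x *v \<psi>) (psit U \<pi> \<phi> \<psi> w x)"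
  by (simp add: Fop_def expect_cscale expect_adj_mult psit_def)

lemma expect_Gop: "expect (Gop U \<pi> \<phi> w x) \<psi> = cinner (dMop U \<pi> \<phi> w x *v \<psi>) (dMop U \<pi> \<phi> w x *v \<psi>)"
  by (simp add: Gop_def expect_adj_mult)

lemma expect_Gop_real: "expect (Gop U \<pi> \<phi> w x) \<psi> = of_real (Re (expect (Gop U \<pi> \<phi> w x) \<psi>))"
  unfolding expect_Gop by (rule cinner_self_real)

lemma expect_Gset: "expect (Gset U \<pi> \<phi> S x) \<psi> = of_real (\<Sum>w\<in>S. Re (expect (Gop U \<pi> \<phi> w x) \<psi>))"
  by (simp add: Gset_def expect_sum flip: expect_Gop_real)

lemma expect_adj_Fset: "expect (adj (Fset U \<pi> \<phi> S x)) \<psi> = cnj (\<Sum>w\<in>S. expect (Fop U \<pi> \<phi> w x) \<psi>)"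
  by (simp add: expect_adj Fset_def expect_sum)

lemma sum_prob: "(\<Sum>w\<in>UNIV. prob U \<pi> \<phi> \<psi> w x) = 1"
proof -
  have "(\<Sum>w\<in>UNIV. expect (Eop U \<pi> \<phi> w x) \<psi>) = 1"
    using Psi_unit[of x] by (simp add: expect_Eop psit_env_contract flip: cinner_env_contract_onb[OF onb])
  then show ?thesis
    by (simp add: expect_Eop_prob flip: of_real_sum)
qed

lemma expect_Fset_UNIV: "expect (Fset U \<pi> \<phi> UNIV x) \<psi> = of_real (Im (cinner (Psi U \<psi> \<phi> x) (dPsi x)))"
proof -
  have "expect (Fset U \<pi> \<phi> UNIV x) \<psi> = \<i> * cinner (dPsi x) (Psi U \<psi> \<phi> x)"
    by (simp add: Fset_def expect_sum expect_Fop psit_env_contract dMop_env_contract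
        flip: sum_distrib_left cinner_env_contract_onb[OF onb])
  then show ?thesis
    using QFI_unit_path(1)[OF Psi_has_derivative Psi_unit]
    by (simp add: cinner_commute[of "dPsi x"] complex_eq_iff)
qed

lemma expect_Gset_UNIV: "expect (Gset U \<pi> \<phi> UNIV x) \<psi> = cinner (dPsi x) (dPsi x)"
  by (simp add: Gset_def expect_sum expect_Gop dMop_env_contract flip: cinner_env_contract_onb[OF onb])

lemma QFI_Psi:
  "QFI (Psi U \<psi> \<phi>) x = 4 * (Re (expect (Gset U \<pi> \<phi> UNIV x) \<psi>) - (Re (expect (Fset U \<pi> \<phi> UNIV x) \<psi>))\<^sup>2)"
  using QFI_unit_path(2)[OF Psi_has_derivative Psi_unit] by (simp add: expect_Gset_UNIV expect_Fset_UNIV)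

lemma weighted_QFI_sigma:
  assumes "0 < prob U \<pi> \<phi> \<psi> w x"
  shows "prob U \<pi> \<phi> \<psi> w x * QFI (sigma_vec U \<pi> \<phi> \<psi> w) x
    = 4 * (Re (expect (Gop U \<pi> \<phi> w x) \<psi>) - (cmod (expect (Fop U \<pi> \<phi> w x) \<psi>))\<^sup>2 / prob U \<pi> \<phi> \<psi> w x)"
proof -
  have "cmod (expect (Fop U \<pi> \<phi> w x) \<psi>) = cmod (cinner (psit U \<pi> \<phi> \<psi> w x) (dMop U \<pi> \<phi> w x *v \<psi>))"
    by (simp add: expect_Fop norm_mult cinner_commute[of "dMop U \<pi> \<phi> w x *v \<psi>"])
  then show ?thesis
    using weighted_QFI_normalization[OF psit_has_derivative, of w x] assms
    by (simp add: sigma_vec_def[abs_def] prob_def expect_Gop)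
qed

lemma expect_Gop_Fop_Eop_nonneg:
  "0 \<le> Re (expect (Gop U \<pi> \<phi> w x) \<psi>) - 2 * t * Re (expect (Fop U \<pi> \<phi> w x) \<psi>) + t\<^sup>2 * prob U \<pi> \<phi> \<psi> w x"
proof -
  define m where "m = psit U \<pi> \<phi> \<psi> w x"
  define d where "d = dMop U \<pi> \<phi> w x *v \<psi>"
  have "cinner (d - (\<i> * of_real t) *s m) (d - (\<i> * of_real t) *s m)
      = cinner d d - of_real t * (\<i> * cinner d m) - of_real t * cnj (\<i> * cinner d m) + of_real (t\<^sup>2) * cinner m m"
    by (simp add: cinner_diff_left cinner_diff_right cinner_smult_left cinner_smult_right
        cinner_commute[of m d] power2_eq_square algebra_simps)
  then have "Re (cinner (d - (\<i> * of_real t) *s m) (d - (\<i> * of_real t) *s m))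
      = Re (expect (Gop U \<pi> \<phi> w x) \<psi>) - 2 * t * Re (expect (Fop U \<pi> \<phi> w x) \<psi>) + t\<^sup>2 * prob U \<pi> \<phi> \<psi> w x"
    by (simp add: m_def d_def expect_Gop expect_Fop prob_def)
  then show ?thesis
    using cinner_self_nonneg by metis
qed

lemma expect_Eop_has_derivative:
  "((\<lambda>y. expect (Eop U \<pi> \<phi> w y) \<psi>) has_vector_derivative of_real (2 * Im (expect (Fop U \<pi> \<phi> w x) \<psi>))) (at x)"
proof -
  have "cinner (dMop U \<pi> \<phi> w x *v \<psi>) (psit U \<pi> \<phi> \<psi> w x) + cinner (psit U \<pi> \<phi> \<psi> w x) (dMop U \<pi> \<phi> w x *v \<psi>)
      = of_real (2 * Im (expect (Fop U \<pi> \<phi> w x) \<psi>))"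
    by (simp add: expect_Fop cinner_commute[of "psit U \<pi> \<phi> \<psi> w x"] complex_eq_iff)
  then show ?thesis
    unfolding expect_Eop using has_vector_derivative_cinner[OF psit_has_derivative psit_has_derivative] by metis
qed

lemma sum_weighted_QFI_sigma:
  assumes "\<forall>w\<in>C. 0 < prob U \<pi> \<phi> \<psi> w x"
  shows "(\<Sum>w\<in>C. prob U \<pi> \<phi> \<psi> w x * QFI (sigma_vec U \<pi> \<phi> \<psi> w) x)
    = 4 * (\<Sum>w\<in>C. Re (expect (Gop U \<pi> \<phi> w x) \<psi>) - (cmod (expect (Fop U \<pi> \<phi> w x) \<psi>))\<^sup>2 / prob U \<pi> \<phi> \<psi> w x)"
  using assms by (simp add: weighted_QFI_sigma sum_distrib_left)

lemma expect_Eop_stationary: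
  assumes "Im (expect (Fop U \<pi> \<phi> w x) \<psi>) = 0"
  shows "vector_derivative (\<lambda>y. expect (Eop U \<pi> \<phi> w y) \<psi>) (at x) = 0"
  using vector_derivative_at[OF expect_Eop_has_derivative] assms by simp

end

theorem theorem3:
  fixes U :: "real \<Rightarrow> complex^('s::finite \<times> 'e::finite)^('s \<times> 'e)"
    and \<psi> :: "complex^'s" and \<phi> :: "complex^'e"
    and \<pi> :: "'w::finite \<Rightarrow> complex^'e"
    and C :: "'w set" and x :: real
  assumes "unit_vec \<psi>" and "unit_vec \<phi>"
    and "\<forall>y. unitary_mat (U y)"
    and "\<forall>y. U differentiable (at y)"
    and "continuous_on UNIV (\<lambda>y. vector_derivative U (at y))"
    and "is_onb \<pi>"
    and "\<forall>w\<in>C. prob U \<pi> \<phi> \<psi> w x > 0"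
  shows "Im (expect (Fset U \<pi> \<phi> UNIV x) \<psi>) = 0
    \<and> complex_of_real (QFI (Psi U \<psi> \<phi>) x)
        = 4 * (expect (Gset U \<pi> \<phi> UNIV x) \<psi> - (expect (Fset U \<pi> \<phi> UNIV x) \<psi>)\<^sup>2)
    \<and> (((\<Sum>w\<in>C. prob U \<pi> \<phi> \<psi> w x * QFI (sigma_vec U \<pi> \<phi> \<psi> w) x) = QFI (Psi U \<psi> \<phi>) x)
       \<longleftrightarrow> ((\<forall>w\<in>C. expect (Fop U \<pi> \<phi> w x) \<psi>
                      = expect (Fset U \<pi> \<phi> UNIV x) \<psi> * expect (Eop U \<pi> \<phi> w x) \<psi>)
            \<and> expect (Gset U \<pi> \<phi> (- C) x) \<psi>
                = expect (Fset U \<pi> \<phi> UNIV x) \<psi> * expect (adj (Fset U \<pi> \<phi> (- C) x)) \<psi>))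
    \<and> (((\<Sum>w\<in>C. prob U \<pi> \<phi> \<psi> w x * QFI (sigma_vec U \<pi> \<phi> \<psi> w) x) = QFI (Psi U \<psi> \<phi>) x)
       \<longrightarrow> (\<forall>w\<in>C. vector_derivative (\<lambda>y. expect (Eop U \<pi> \<phi> w y) \<psi>) (at x) = 0))"
proof -
  interpret environment_measurement U \<psi> \<phi> \<pi>
    using assms(1-4,6) by unfold_locales
  define f where "f w = expect (Fop U \<pi> \<phi> w x) \<psi>" for w
  define p where "p w = prob U \<pi> \<phi> \<psi> w x" for w
  define g where "g w = Re (expect (Gop U \<pi> \<phi> w x) \<psi>)" for w
  define t where "t = Re (expect (Fset U \<pi> \<phi> UNIV x) \<psi>)"
  have F_UNIV: "expect (Fset U \<pi> \<phi> UNIV x) \<psi> = of_real t"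
    using expect_Fset_UNIV by (simp add: t_def)
  then have sum_f: "(\<Sum>w\<in>UNIV. f w) = of_real t"
    by (simp add: f_def Fset_def expect_sum)
  have QFI_Psi_eq: "QFI (Psi U \<psi> \<phi>) x = 4 * ((\<Sum>w\<in>UNIV. g w) - t\<^sup>2)"
    by (simp add: QFI_Psi expect_Gset t_def g_def)
  have lossless: "(\<Sum>w\<in>C. prob U \<pi> \<phi> \<psi> w x * QFI (sigma_vec U \<pi> \<phi> \<psi> w) x) = QFI (Psi U \<psi> \<phi>) x
      \<longleftrightarrow> (\<Sum>w\<in>C. g w - (cmod (f w))\<^sup>2 / p w) = (\<Sum>w\<in>UNIV. g w) - t\<^sup>2"
    using sum_weighted_QFI_sigma[OF assms(7)]
    by (simp add: QFI_Psi_eq f_def g_def p_def del: right_diff_distrib_numeral)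
  have "\<forall>w\<in>C. 0 < p w" "\<forall>w\<in>-C. 0 \<le> g w - 2 * t * Re (f w) + t\<^sup>2 * p w"
    using assms(7) expect_Gop_Fop_Eop_nonneg by (simp_all add: p_def f_def g_def)
  note conditions = lossless_iff_conditions[OF sum_prob[of x, folded p_def] sum_f this]
  show ?thesis
    using lossless[unfolded conditions] expect_Eop_stationary
    by (auto simp: F_UNIV expect_Gset expect_adj_Fset expect_Eop_prob QFI_Psi_eq f_def g_def p_def)
qed

end
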